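(* For a graph $G$, $\gamma_{(2,2,2)}(G)=3$ if and only if $\gamma_{\times2,t}(G)=3$.
   Context: All graphs are finite and simple; $N(v)$ is the open neighbourhood. $\gamma_{(2,2,2)}(G)$ is the minimum of $\sum_v f(v)$ over functions $f:V(G)\to\{0,1,2\}$ with $\sum_{u\in N(v)}f(u)\ge2$ for every vertex $v$ (defined when such $f$ exists, i.e., when $G$ has no isolated vertex). $\gamma_{\times2,t}(G)$ is the minimum size of $S\subseteq V(G)$ such that every vertex has at least two neighbours in $S$ (defined when $G$ has minimum degree at least $2$). *)

theory Defs
  imports Main "HOL-Library.Extended_Nat"
begin

definition simple_graph :: "'a set \<Rightarrow> ('a \<Rightarrow> 'a \<Rightarrow> bool) \<Rightarrow> bool" where
  "simple_graph V E \<longleftrightarrow> finite V \<and> (\<forall>u v. E u v \<longrightarrow> E v u) \<and> (\<forall>v. \<not> E v v)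
     \<and> (\<forall>u v. E u v \<longrightarrow> u \<in> V \<and> v \<in> V)"

definition nbhd :: "'a set \<Rightarrow> ('a \<Rightarrow> 'a \<Rightarrow> bool) \<Rightarrow> 'a \<Rightarrow> 'a set" where
  "nbhd V E v = {u \<in> V. E v u}"

text \<open>(2,2,2)-domination number; the infimum of the empty set is \<infinity>
  (the undefined case, i.e. graphs with an isolated vertex).\<close>
definition gamma_222 :: "'a set \<Rightarrow> ('a \<Rightarrow> 'a \<Rightarrow> bool) \<Rightarrow> enat" where
  "gamma_222 V E = Inf {enat (\<Sum>v\<in>V. f v) | f :: 'a \<Rightarrow> nat.
      (\<forall>v\<in>V. f v \<in> {0, 1, 2}) \<and> (\<forall>v\<in>V. (\<Sum>u\<in>nbhd V E v. f u) \<ge> 2)}"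

text \<open>Double total domination number; \<infinity> when undefined (minimum degree < 2).\<close>
definition gamma_x2t :: "'a set \<Rightarrow> ('a \<Rightarrow> 'a \<Rightarrow> bool) \<Rightarrow> enat" where
  "gamma_x2t V E = Inf {enat (card S) | S. S \<subseteq> V \<and> (\<forall>v\<in>V. card (nbhd V E v \<inter> S) \<ge> 2)}"

end

theory Submission
  imports Defs
begin

text \<open>Let \<open>f\<close> be a (2,2,2)-function of a graph with a vertex \<open>v\<close>. Some neighbour \<open>u\<close> of \<open>v\<close> has
  \<open>f u > 0\<close>, and \<open>u\<close> together with its neighbourhood already carries weight \<open>f u + 2\<close>; so the
  weight of \<open>f\<close> is at least 3, and if it is exactly 3 then \<open>f\<close> takes no value 2. A (2,2,2)-function
  of weight 3 is therefore the indicator function of a double total dominating set of size 3,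
  and conversely every double total dominating set is a (2,2,2)-function of the same weight.\<close>

definition is_222_function :: "'a set \<Rightarrow> ('a \<Rightarrow> 'a \<Rightarrow> bool) \<Rightarrow> ('a \<Rightarrow> nat) \<Rightarrow> bool" where
  "is_222_function V E f \<longleftrightarrow>
     (\<forall>v\<in>V. f v \<in> {0, 1, 2}) \<and> (\<forall>v\<in>V. (\<Sum>u\<in>nbhd V E v. f u) \<ge> 2)"

definition double_total_dominating :: "'a set \<Rightarrow> ('a \<Rightarrow> 'a \<Rightarrow> bool) \<Rightarrow> 'a set \<Rightarrow> bool" where
  "double_total_dominating V E S \<longleftrightarrow> S \<subseteq> V \<and> (\<forall>v\<in>V. card (nbhd V E v \<inter> S) \<ge> 2)"

lemma gamma_222_eq_Inf:
  "gamma_222 V E = Inf {enat (\<Sum>v\<in>V. f v) | f. is_222_function V E f}"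
  by (simp add: gamma_222_def is_222_function_def)

lemma gamma_x2t_eq_Inf:
  "gamma_x2t V E = Inf {enat (card S) | S. double_total_dominating V E S}"
  by (simp add: gamma_x2t_def double_total_dominating_def)

lemma wellorder_Inf_eq_iff:
  fixes n :: "'a::{complete_lattice, wellorder}"
  assumes "n \<noteq> top"
  shows "Inf X = n \<longleftrightarrow> n \<in> X \<and> (\<forall>x\<in>X. n \<le> x)"
proof
  assume Inf: "Inf X = n"
  with assms have "X \<noteq> {}" by auto
  then have "Inf X \<in> X" by (auto intro: wellorder_InfI)
  with Inf show "n \<in> X \<and> (\<forall>x\<in>X. n \<le> x)" by (auto intro: Inf_lower)
qed (auto intro: order_antisym Inf_lower Inf_greatest)

lemma Inf_enat_eq_iff_attained_min:
  assumes "\<And>x. P x \<Longrightarrow> w x = n \<Longrightarrow> \<forall>y. P y \<longrightarrow> n \<le> w y"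
  shows "Inf {enat (w x) | x. P x} = enat n \<longleftrightarrow> (\<exists>x. P x \<and> w x = n)"
proof -
  have "enat n \<noteq> top" by (simp add: top_enat_def)
  then show ?thesis
    unfolding wellorder_Inf_eq_iff[OF \<open>enat n \<noteq> top\<close>] using assms by auto
qed

lemma nbhd_subset:
  assumes "simple_graph V E"
  shows "nbhd V E v \<subseteq> V - {v}"
  using assms by (auto simp: simple_graph_def nbhd_def)

lemma finite_nbhd:
  assumes "simple_graph V E"
  shows "finite (nbhd V E v)"
  using assms by (simp add: simple_graph_def nbhd_def)

lemma value_add_sum_nbhd_le_sum:
  fixes f :: "'a \<Rightarrow> nat"
  assumes G: "simple_graph V E" and "u \<in> V"
  shows "f u + (\<Sum>w\<in>nbhd V E u. f w) \<le> (\<Sum>w\<in>V. f w)"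
proof -
  have fin: "finite V" using G by (simp add: simple_graph_def)
  have "(\<Sum>w\<in>nbhd V E u. f w) \<le> (\<Sum>w\<in>V - {u}. f w)"
    using fin nbhd_subset[OF G] by (intro sum_mono2) auto
  also have "f u + (\<Sum>w\<in>V - {u}. f w) = (\<Sum>w\<in>V. f w)"
    using fin \<open>u \<in> V\<close> by (simp add: sum.remove)
  finally show ?thesis by simp
qed

lemma is_222_function_weight_ge_3:
  assumes G: "simple_graph V E" and f: "is_222_function V E f" and "V \<noteq> {}"
  shows "(\<Sum>w\<in>V. f w) \<ge> 3"
proof -
  obtain v where "v \<in> V" using \<open>V \<noteq> {}\<close> by auto
  with f have "(\<Sum>u\<in>nbhd V E v. f u) \<ge> 2" by (simp add: is_222_function_def)
  then obtain u where u: "u \<in> nbhd V E v" "f u > 0"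
    by (metis gr0I not_numeral_le_zero sum.neutral)
  with nbhd_subset[OF G] have "u \<in> V" by auto
  with f have "(\<Sum>w\<in>nbhd V E u. f w) \<ge> 2" by (simp add: is_222_function_def)
  with u value_add_sum_nbhd_le_sum[OF G \<open>u \<in> V\<close>, of f] show ?thesis by linarith
qed

lemma is_222_function_indicator:
  assumes G: "simple_graph V E" and S: "double_total_dominating V E S"
  shows "is_222_function V E (\<lambda>v. of_bool (v \<in> S))"
    and "(\<Sum>v\<in>V. of_bool (v \<in> S)) = card S"
proof -
  have fin: "finite V" using G by (simp add: simple_graph_def)
  show "is_222_function V E (\<lambda>v. of_bool (v \<in> S))"
    using S finite_nbhd[OF G] by (simp add: is_222_function_def double_total_dominating_def)
  show "(\<Sum>v\<in>V. of_bool (v \<in> S)) = card S"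
    using S fin by (simp add: double_total_dominating_def Int_absorb1 Int_absorb2)
qed

lemma is_222_function_weight_3_imp_double_total_dominating:
  assumes G: "simple_graph V E" and f: "is_222_function V E f" and w: "(\<Sum>v\<in>V. f v) = 3"
  defines "S \<equiv> {v \<in> V. f v = 1}"
  shows "double_total_dominating V E S" and "card S = 3"
proof -
  have fin: "finite V" using G by (simp add: simple_graph_def)
  have f01: "f v = of_bool (v \<in> S)" if "v \<in> V" for v
  proof -
    have "f v + 2 \<le> 3"
      using f value_add_sum_nbhd_le_sum[OF G \<open>v \<in> V\<close>, of f] w \<open>v \<in> V\<close>
      by (fastforce simp: is_222_function_def)
    then show ?thesis using \<open>v \<in> V\<close> by (auto simp: S_def)
  qed
  have sum_eq_card: "(\<Sum>u\<in>T. f u) = card (T \<inter> S)" if "T \<subseteq> V" for T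
  proof -
    have "(\<Sum>u\<in>T. f u) = (\<Sum>u\<in>T. of_bool (u \<in> S))"
      using that f01 by (intro sum.cong) auto
    also have "\<dots> = card (T \<inter> S)"
      using that fin by (simp add: finite_subset Int_def)
    finally show ?thesis .
  qed
  show "card S = 3"
    using sum_eq_card[of V] w by (simp add: S_def Int_absorb1)
  have "card (nbhd V E v \<inter> S) \<ge> 2" if "v \<in> V" for v
  proof -
    have "nbhd V E v \<subseteq> V" using nbhd_subset[OF G, of v] by blast
    with f that show ?thesis by (simp add: is_222_function_def sum_eq_card[symmetric])
  qed
  then show "double_total_dominating V E S"
    by (auto simp: double_total_dominating_def S_def)
qed

lemma gamma_222_eq_3_iff:
  assumes G: "simple_graph V E"
  shows "gamma_222 V E = 3 \<longleftrightarrow> (\<exists>f. is_222_function V E f \<and> (\<Sum>v\<in>V. f v) = 3)"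
proof -
  have "\<forall>g. is_222_function V E g \<longrightarrow> 3 \<le> (\<Sum>v\<in>V. g v)"
    if "is_222_function V E f" and "(\<Sum>v\<in>V. f v) = 3" for f
  proof -
    from that have "V \<noteq> {}" by auto
    then show ?thesis using is_222_function_weight_ge_3[OF G] by blast
  qed
  then show ?thesis
    unfolding gamma_222_eq_Inf numeral_eq_enat by (rule Inf_enat_eq_iff_attained_min)
qed

lemma gamma_x2t_eq_3_iff:
  assumes G: "simple_graph V E"
  shows "gamma_x2t V E = 3 \<longleftrightarrow> (\<exists>S. double_total_dominating V E S \<and> card S = 3)"
proof -
  have "\<forall>T. double_total_dominating V E T \<longrightarrow> 3 \<le> card T"
    if "double_total_dominating V E S" and "card S = 3" for S
  proof -
    from that have "V \<noteq> {}" by (auto simp: double_total_dominating_def)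
    then show ?thesis
      using is_222_function_indicator[OF G] is_222_function_weight_ge_3[OF G] by metis
  qed
  then show ?thesis
    unfolding gamma_x2t_eq_Inf numeral_eq_enat by (rule Inf_enat_eq_iff_attained_min)
qed

theorem theorem17:
  fixes V :: "'a set" and E :: "'a \<Rightarrow> 'a \<Rightarrow> bool"
  assumes "simple_graph V E"
  shows "gamma_222 V E = 3 \<longleftrightarrow> gamma_x2t V E = 3"
  unfolding gamma_222_eq_3_iff[OF assms] gamma_x2t_eq_3_iff[OF assms]
  using is_222_function_indicator[OF assms]
    is_222_function_weight_3_imp_double_total_dominating[OF assms]
  by metis

end
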